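(* Let $\Gamma$ be an abstract cache and $\varrho$ an abstract environment. If $\Gamma,\varrho\models e$ and $e\to_n e'$ (labelled evaluation at stage $n$), then $\Gamma,\varrho\models e'$.
   Context: **Labelled SLamJS.** Constants $k ::= \mathsf{undef}\mid\mathsf{null}\mid\mathsf{true}\mid\mathsf{false}\mid s\mid n$ ($s$ string, $n$ number); $x$ ranges over names, $\mathfrak m$ over markers, $\ell$ over a set $\mathrm{Label}$. Expressions are labelled terms $e ::= t^\ell$, with terms $t ::= k\mid\{s_1:e_1,\dots,s_j:e_j\}\mid x\mid\mathsf{fun}(x)\{e\}\mid e(e)\mid\mathsf{box}\,e\mid\mathsf{unbox}\,e\mid\mathsf{run}\,e\mid\mathsf{if}(e)\{e\}\mathsf{else}\{e\}\mid e[e]\mid e[e]=e\mid\mathsf{del}\,e[e]\mid(t,\rho)\mid\mathsf{run}\,e\,\mathsf{in}\,\rho\mid(\mathfrak m:e)$; environments $\rho$ map finitely many names to stage-0 values. $\mathrm{lbl}(t^\ell)=\ell$; for $e=t^\ell$, $e^{\ell'}$ means $t^{\ell'}$ and $(e,\rho)^{\ell'}$ means $(t,\rho)^{\ell'}$. Values are labelled expressions whose terms are: at stage 0 closures $(\mathsf{fun}(x)\{e\},\rho)$; at every stage $n$: constants, records of stage-$n$ values, $\mathsf{box}\,v^{n+1}$, $(\mathfrak m:v^n)$; at stages $n+1$ additionally $x$, $\mathsf{fun}(x)\{v^{n+1}\}$, $v^{n+1}(v^{n+1})$, $\mathsf{run}\,v^{n+1}$, $\mathsf{if}(v^{n+1})\{v^{n+1}\}\mathsf{else}\{v^{n+1}\}$,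 $v^{n+1}[v^{n+1}]$, $v^{n+1}[v^{n+1}]=v^{n+1}$, $\mathsf{del}\,v^{n+1}[v^{n+1}]$; at stages $n+2$ additionally $\mathsf{unbox}\,v^{n+1}$. $\pi$ denotes the string "__proto__". **Labelled top-level reduction** $\dashrightarrow_n$: Environment propagation: $(k,\rho)^\ell\dashrightarrow_n k^\ell$; $(\{\overline{s:t^\ell}\},\rho)^{\ell'}\dashrightarrow_n\{\overline{s:(t,\rho)^\ell}\}^{\ell'}$; $(x,\rho)^\ell\dashrightarrow_{n+1}x^\ell$; $(\mathsf{fun}(x)\{t^\ell\},\rho)^{\ell'}\dashrightarrow_{n+1}(\mathsf{fun}(x)\{(t,\rho)^\ell\})^{\ell'}$; $(t_1^{\ell_1}(t_2^{\ell_2}),\rho)^\ell\dashrightarrow_n((t_1,\rho)^{\ell_1}((t_2,\rho)^{\ell_2}))^\ell$; $(\mathsf{box}\,t^\ell,\rho)^{\ell'}\dashrightarrow_n(\mathsf{box}\,(t,\rho)^\ell)^{\ell'}$; same for $\mathsf{unbox}$; $(\mathsf{run}\,t^\ell,\rho)^{\ell'}\dashrightarrow_0(\mathsf{run}\,(t,\rho)^\ell\,\mathsf{in}\,\rho)^{\ell'}$; $(\mathsf{run}\,t^\ell,\rho)^{\ell'}\dashrightarrow_{n+1}(\mathsf{run}\,(t,\rho)^\ell)^{\ell'}$; for $\mathsf{if}$, $[\cdot]$, $[\cdot]=\cdot$, $\mathsf{del}$ and $(\mathfrak m:\cdot)$ the environment is pushed to every immediate subexpression $t_i^{\ell_i}\mapsto(t_i,\rho)^{\ell_i}$,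 keeping the outer label, at every stage $n$. Proper rules: (Lookup) $(x,\rho)^\ell\dashrightarrow_0 v^\ell$ where $\rho(x)=v$; (Apply) $((\mathsf{fun}(x)\{t^{\ell_1}\},\rho)^{\ell_2}(v))^{\ell_3}\dashrightarrow_0(t,\rho[x\mapsto v])^{\ell_1}$; (Unbox) $(\mathsf{unbox}\,(\mathsf{box}\,v^1)^{\ell_1})^{\ell_2}\dashrightarrow_1(v^1)^{\ell_2}$; (Run) $(\mathsf{run}\,(\mathsf{box}\,v^1)^{\ell_1}\,\mathsf{in}\,\rho)^{\ell_2}\dashrightarrow_0(v^1,\rho)^{\ell_2}$; (IfTrue/IfFalse) $(\mathsf{if}(\mathsf{true})\{t_1^{\ell_1}\}\mathsf{else}\{t_2^{\ell_2}\})^\ell\dashrightarrow_0 t_1^{\ell_1}$, and with $\mathsf{false}$ to $t_2^{\ell_2}$; (Read1) $(\{\overline{s:v},s_i:v_i,\overline{s:v}'\}^{\ell_1}[s_i^{\ell_2}])^{\ell_3}\dashrightarrow_0 v_i^{\ell_3}$; (Read2) $(\{\overline{s:v},\pi:\{\overline{s:v}'\}^{\ell_1'},\overline{s:v}''\}^{\ell_1}[s_x^{\ell_2}])^{\ell_3}\dashrightarrow_0(\{\overline{s:v}'\}^{\ell_1'}[s_x^{\ell_2}])^{\ell_3}$ if $s_x\notin\overline s\cup\overline s''$; (Read3) the same with $\pi:\mathsf{null}^{\ell_1'}$ reduces to $\mathsf{undef}^{\ell_3}$; (Write1) $(\{\overline{s:v},s_i:v_i,\overline{s:v}'\}^{\ell_1}[s_i^{\ell_2}]=v_i')^{\ell_3}\dashrightarrow_0\{\overline{s:v},s_i:v_i',\overline{s:v}'\}^{\ell_3}$;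 (Write2) $(\{\overline{s:v}\}^{\ell_1}[s_x^{\ell_2}]=v_x)^{\ell_3}\dashrightarrow_0\{\overline{s:v},s_x:v_x\}^{\ell_3}$ if $s_x\notin\overline s$; (Del1) $(\mathsf{del}\,\{\overline{s:v},s_i:v_i,\overline{s:v}'\}^{\ell_1}[s_i^{\ell_2}])^{\ell_3}\dashrightarrow_0\{\overline{s:v},\overline{s:v}'\}^{\ell_3}$; (Del2) $(\mathsf{del}\,\{\overline{s:v}\}^{\ell_1}[s_x^{\ell_2}])^{\ell_3}\dashrightarrow_0\{\overline{s:v}\}^{\ell_3}$ if $s_x\notin\overline s$. Lifts: $(((\mathfrak m:t^{\ell_1}),\rho)^{\ell_2}(v))^{\ell_3}\dashrightarrow_0(\mathfrak m:((t,\rho)^{\ell_1}(v))^{\ell_3})^{\ell_3}$; $(\mathsf{if}((\mathfrak m:v)^{\ell_0})\{t_1^{\ell_1}\}\mathsf{else}\{t_2^{\ell_2}\})^\ell\dashrightarrow_0(\mathfrak m:(\mathsf{if}(v)\{t_1^{\ell_1}\}\mathsf{else}\{t_2^{\ell_2}\})^\ell)^\ell$; $(\mathsf{unbox}\,(\mathfrak m:v)^{\ell_1})^{\ell_2}\dashrightarrow_1(\mathfrak m:(\mathsf{unbox}\,v)^{\ell_2})^{\ell_2}$; and at stage 0, for $\mathsf{run}\,\cdot\,\mathsf{in}\,\rho$, for the record and the selector of a read, of a write, and of a delete: an operand of the form $(\mathfrak m:v)^{\ell_1}$ in an expression with outer label $\ell_2$ yields $(\mathfrak m:(\text{same expression with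 }v\text{ in place of the operand})^{\ell_2})^{\ell_2}$. **Evaluation.** Contexts $C^m_n$ as for unlabelled SLamJS (hole at stage $n$ inside stage $m$: records, $\mathsf{fun}$ body at stage $\ge1$, function then argument, $\mathsf{box}$ body one stage up, $\mathsf{unbox}$ argument one stage down, $\mathsf{run}$, $\mathsf{if}$ condition, and at stages $\ge1$ the $\mathsf{if}$ branches, left-to-right in reads/writes/deletes, $\mathsf{run}\,\cdot\,\mathsf{in}\,\rho$, markers), each non-empty context layer carrying an outer label. $C\langle t_1^{\ell_1}\rangle\to_m C\langle t_2^{\ell_2}\rangle$ whenever $C\in\mathcal C^m_n$ and $t_1^{\ell_1}\dashrightarrow_n t_2^{\ell_2}$. **0CFA.** Abstract values $\nu ::= \mathtt{NULL}\mid\mathtt{UNDEF}\mid\mathtt{BOOL}\mid\mathtt{NUM}\mid\mathtt{STR}\mid\mathtt{FUN}(x,e)\mid\mathtt{BOX}(e)\mid\mathtt{REC}(\ell)$; abstract variables are names $x$ or $\ell.p$ ($p$ a field name). An abstract cache is $\Gamma:\mathrm{Label}\to\mathcal P(\mathrm{AbsVal})$, an abstract environment is $\varrho:\mathrm{AbsVar}\to\mathcal P(\mathrm{AbsVal})$. $\lceil k\rceil$ is $\mathtt{NULL},\mathtt{UNDEF},\mathtt{BOOL},\mathtt{NUM},\mathtt{STR}$ according to the kind of $k$. $\mathtt{proto}(\ell)_\varrho$ is the least set $P$ of labels with $\ell\in P$ and $\ell'\in P$ whenever $p\in P$ and $\mathtt{REC}(\ell')\in\varrho(p.\pi)$. The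 judgements $\Gamma,\varrho\models e$, $\Gamma,\varrho\models\rho$, $\Gamma,\varrho\models\nu\approx t$ are defined by mutual induction (writing $\models$ for $\Gamma,\varrho\models$): $\models k^\ell$ iff $\lceil k\rceil\in\Gamma(\ell)$; $\models x^\ell$ iff $\varrho(x)\subseteq\Gamma(\ell)$; $\models\{\overline{s:e}\}^\ell$ iff all $\models e_i$ and $\exists\mathtt{REC}(\ell')\in\Gamma(\ell).\forall i.\Gamma(\mathrm{lbl}(e_i))\subseteq\varrho(\ell'.s_i)$; $\models(\mathsf{fun}(x)\{e\})^\ell$ iff $\models e$ and $\exists\nu\in\Gamma(\ell).\models\nu\approx\mathsf{fun}(x)\{e\}$; $\models(t_1^{\ell_1}(t_2^{\ell_2}))^\ell$ iff $\models t_1^{\ell_1}$, $\models t_2^{\ell_2}$ and $\forall\mathtt{FUN}(x,t_3^{\ell_3})\in\Gamma(\ell_1).\Gamma(\ell_2)\subseteq\varrho(x)\wedge\Gamma(\ell_3)\subseteq\Gamma(\ell)$; $\models(\mathsf{box}\,e)^\ell$ iff $\models e$ and $\exists\nu\in\Gamma(\ell).\models\nu\approx\mathsf{box}\,e$; $\models(\mathsf{unbox}\,t^\ell)^{\ell_0}$ and $\models(\mathsf{run}\,t^\ell)^{\ell_0}$ iff $\models t^\ell$ and $\forall\mathtt{BOX}(t'^{\ell'})\in\Gamma(\ell).\Gamma(\ell')\subseteq\Gamma(\ell_0)$; $\models(\mathsf{run}\,t^\ell\,\mathsf{in}\,\rho)^{\ell_0}$ iff additionally $\models\rho$; $\models(\mathsf{if}(t_1^{\ell_1})\{t_2^{\ell_2}\}\mathsf{else}\{t_3^{\ell_3}\})^{\ell_4}$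 iff all three hold and $\Gamma(\ell_2)\cup\Gamma(\ell_3)\subseteq\Gamma(\ell_4)$; $\models(t,\rho)^\ell$ iff $\models t^\ell$ and $\models\rho$; $\models(t_1^{\ell_1}[t_2^{\ell_2}])^\ell$ iff both hold, $\forall\mathtt{REC}(\ell')\in\Gamma(\ell_1).\forall s.\forall\ell''\in\mathtt{proto}(\ell')_\varrho.\varrho(\ell''.s)\subseteq\Gamma(\ell)$, and $\mathtt{UNDEF}\in\Gamma(\ell)$; $\models(t_1^{\ell_1}[t_2^{\ell_2}]=t_3^{\ell_3})^\ell$ iff all three hold, $\forall s.\forall\mathtt{REC}(\ell')\in\Gamma(\ell_1).\Gamma(\ell_3)\subseteq\varrho(\ell'.s)$, and $\Gamma(\ell_1)\subseteq\Gamma(\ell)$; $\models(\mathsf{del}\,t_1^{\ell_1}[t_2^{\ell_2}])^\ell$ iff both hold and $\Gamma(\ell_1)\subseteq\Gamma(\ell)$; $\models(\mathfrak m:t_1^{\ell_1})^\ell$ iff $\models t_1^{\ell_1}$ and $\Gamma(\ell_1)\subseteq\Gamma(\ell)$. $\models\rho$ iff $\forall x\in\mathrm{dom}(\rho).\models\rho(x)\wedge\Gamma(\mathrm{lbl}(\rho(x)))\subseteq\varrho(x)$. Approximation: $\models\lceil k\rceil\approx k$; $\models\mathtt{FUN}(x,e)\approx\mathsf{fun}(x)\{e\}$; $\models\mathtt{BOX}(e)\approx\mathsf{box}\,e$; $\models\mathtt{REC}(\ell')\approx\{\overline{s:t^\ell}\}$ if $\forall i.\exists\nu_i\in\varrho(\ell'.s_i).\models\nu_i\approx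 t_i$; $\models\nu\approx t'$ if $\models\nu\approx t$ and $t^\ell\to_n t'^\ell$; $\models\nu\approx(t,\rho)$ if $\models\nu\approx t$ and $\models\rho$. *)

theory Defs
  imports Complex_Main "HOL-Library.Finite_Map"
begin

type_synonym name = string

datatype const = CUndef | CNull | CTrue | CFalse | CStr string | CNum real

datatype ('l, 'm) trm =
    Const const
  | Rec "(string \<times> ('l, 'm) expr) list"
  | Var name
  | Fun name "('l, 'm) expr"
  | App "('l, 'm) expr" "('l, 'm) expr"
  | Box "('l, 'm) expr"
  | Unbox "('l, 'm) expr"
  | Run "('l, 'm) expr"
  | If "('l, 'm) expr" "('l, 'm) expr" "('l, 'm) expr"
  | Read "('l, 'm) expr" "('l, 'm) expr"
  | Write "('l, 'm) expr" "('l, 'm) expr" "('l, 'm) expr"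
  | Del "('l, 'm) expr" "('l, 'm) expr"
  | Clo "('l, 'm) trm" "(name, ('l, 'm) expr) fmap"
  | RunIn "('l, 'm) expr" "(name, ('l, 'm) expr) fmap"
  | Mark 'm "('l, 'm) expr"
and ('l, 'm) expr = L "('l, 'm) trm" 'l

type_synonym ('l, 'm) env = "(name, ('l, 'm) expr) fmap"

fun lbl :: "('l, 'm) expr \<Rightarrow> 'l" where
  "lbl (L t l) = l"

fun trm_of :: "('l, 'm) expr \<Rightarrow> ('l, 'm) trm" where
  "trm_of (L t l) = t"

fun relabel :: "('l, 'm) expr \<Rightarrow> 'l \<Rightarrow> ('l, 'm) expr" where
  "relabel (L t l) l' = L t l'"

fun clo :: "('l, 'm) env \<Rightarrow> ('l, 'm) expr \<Rightarrow> ('l, 'm) expr" where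
  "clo \<rho> (L t l) = L (Clo t \<rho>) l"

definition proto_str :: string where "proto_str = ''__proto__''"

definition fields :: "(string \<times> ('l, 'm) expr) list \<Rightarrow> string set" where
  "fields fs = fst ` set fs"

inductive is_val :: "nat \<Rightarrow> ('l, 'm) expr \<Rightarrow> bool" where
  v_clo:   "is_val 0 (L (Clo (Fun x e) \<rho>) l)"
| v_const: "is_val n (L (Const k) l)"
| v_rec:   "(\<forall>p\<in>set fs. is_val n (snd p)) \<Longrightarrow> is_val n (L (Rec fs) l)"
| v_box:   "is_val (Suc n) v \<Longrightarrow> is_val n (L (Box v) l)"
| v_mark:  "is_val n v \<Longrightarrow> is_val n (L (Mark m v) l)"
| v_var:   "is_val (Suc n) (L (Var x) l)"
| v_fun:   "is_val (Suc n) v \<Longrightarrow> is_val (Suc n) (L (Fun x v) l)"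
| v_app:   "is_val (Suc n) v1 \<Longrightarrow> is_val (Suc n) v2 \<Longrightarrow> is_val (Suc n) (L (App v1 v2) l)"
| v_run:   "is_val (Suc n) v \<Longrightarrow> is_val (Suc n) (L (Run v) l)"
| v_if:    "is_val (Suc n) v1 \<Longrightarrow> is_val (Suc n) v2 \<Longrightarrow> is_val (Suc n) v3 \<Longrightarrow>
            is_val (Suc n) (L (If v1 v2 v3) l)"
| v_read:  "is_val (Suc n) v1 \<Longrightarrow> is_val (Suc n) v2 \<Longrightarrow> is_val (Suc n) (L (Read v1 v2) l)"
| v_write: "is_val (Suc n) v1 \<Longrightarrow> is_val (Suc n) v2 \<Longrightarrow> is_val (Suc n) v3 \<Longrightarrow>
            is_val (Suc n) (L (Write v1 v2 v3) l)"
| v_del:   "is_val (Suc n) v1 \<Longrightarrow> is_val (Suc n) v2 \<Longrightarrow> is_val (Suc n) (L (Del v1 v2) l)"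
| v_unbox: "is_val (Suc n) v \<Longrightarrow> is_val (Suc (Suc n)) (L (Unbox v) l)"

inductive tl_red :: "nat \<Rightarrow> ('l, 'm) expr \<Rightarrow> ('l, 'm) expr \<Rightarrow> bool" where
  ep_const: "tl_red n (L (Clo (Const k) \<rho>) l) (L (Const k) l)"
| ep_rec:   "tl_red n (L (Clo (Rec fs) \<rho>) l') (L (Rec (map (\<lambda>(s, e). (s, clo \<rho> e)) fs)) l')"
| ep_var:   "tl_red (Suc n) (L (Clo (Var x) \<rho>) l) (L (Var x) l)"
| ep_fun:   "tl_red (Suc n) (L (Clo (Fun x e) \<rho>) l') (L (Fun x (clo \<rho> e)) l')"
| ep_app:   "tl_red n (L (Clo (App e1 e2) \<rho>) l) (L (App (clo \<rho> e1) (clo \<rho> e2)) l)"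
| ep_box:   "tl_red n (L (Clo (Box e) \<rho>) l') (L (Box (clo \<rho> e)) l')"
| ep_unbox: "tl_red n (L (Clo (Unbox e) \<rho>) l') (L (Unbox (clo \<rho> e)) l')"
| ep_run0:  "tl_red 0 (L (Clo (Run e) \<rho>) l') (L (RunIn (clo \<rho> e) \<rho>) l')"
| ep_runS:  "tl_red (Suc n) (L (Clo (Run e) \<rho>) l') (L (Run (clo \<rho> e)) l')"
| ep_if:    "tl_red n (L (Clo (If e1 e2 e3) \<rho>) l) (L (If (clo \<rho> e1) (clo \<rho> e2) (clo \<rho> e3)) l)"
| ep_read:  "tl_red n (L (Clo (Read e1 e2) \<rho>) l) (L (Read (clo \<rho> e1) (clo \<rho> e2)) l)"
| ep_write: "tl_red n (L (Clo (Write e1 e2 e3) \<rho>) l)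
                      (L (Write (clo \<rho> e1) (clo \<rho> e2) (clo \<rho> e3)) l)"
| ep_del:   "tl_red n (L (Clo (Del e1 e2) \<rho>) l) (L (Del (clo \<rho> e1) (clo \<rho> e2)) l)"
| ep_mark:  "tl_red n (L (Clo (Mark m e) \<rho>) l) (L (Mark m (clo \<rho> e)) l)"
| lookup_rule:"fmlookup \<rho> x = Some v \<Longrightarrow> is_val 0 v \<Longrightarrow>
             tl_red 0 (L (Clo (Var x) \<rho>) l) (relabel v l)"
| app_rule:  "is_val 0 v \<Longrightarrow>
             tl_red 0 (L (App (L (Clo (Fun x (L t l1)) \<rho>) l2) v) l3) (L (Clo t (fmupd x v \<rho>)) l1)"
| unbox_rule:"is_val 1 v \<Longrightarrow> tl_red 1 (L (Unbox (L (Box v) l1)) l2) (relabel v l2)"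
| run_rule:"is_val 1 v \<Longrightarrow> tl_red 0 (L (RunIn (L (Box v) l1) \<rho>) l2) (L (Clo (trm_of v) \<rho>) l2)"
| if_true:  "tl_red 0 (L (If (L (Const CTrue) l0) (L t1 l1) (L t2 l2)) l) (L t1 l1)"
| if_false: "tl_red 0 (L (If (L (Const CFalse) l0) (L t1 l1) (L t2 l2)) l) (L t2 l2)"
| read1:    "is_val 0 (L (Rec (fs1 @ [(si, vi)] @ fs2)) l1) \<Longrightarrow>
             tl_red 0 (L (Read (L (Rec (fs1 @ [(si, vi)] @ fs2)) l1) (L (Const (CStr si)) l2)) l3)
                      (relabel vi l3)"
| read2:    "is_val 0 (L (Rec (fs1 @ [(proto_str, L (Rec fs') l1')] @ fs2)) l1) \<Longrightarrow>
             sx \<notin> fields fs1 \<union> fields fs2 \<Longrightarrow>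
             tl_red 0 (L (Read (L (Rec (fs1 @ [(proto_str, L (Rec fs') l1')] @ fs2)) l1)
                                (L (Const (CStr sx)) l2)) l3)
                      (L (Read (L (Rec fs') l1') (L (Const (CStr sx)) l2)) l3)"
| read3:    "is_val 0 (L (Rec (fs1 @ [(proto_str, L (Const CNull) l1')] @ fs2)) l1) \<Longrightarrow>
             sx \<notin> fields fs1 \<union> fields fs2 \<Longrightarrow>
             tl_red 0 (L (Read (L (Rec (fs1 @ [(proto_str, L (Const CNull) l1')] @ fs2)) l1)
                                (L (Const (CStr sx)) l2)) l3)
                      (L (Const CUndef) l3)"
| write1:   "is_val 0 (L (Rec (fs1 @ [(si, vi)] @ fs2)) l1) \<Longrightarrow> is_val 0 vi' \<Longrightarrow>
             tl_red 0 (L (Write (L (Rec (fs1 @ [(si, vi)] @ fs2)) l1) (L (Const (CStr si)) l2) vi') l3)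
                      (L (Rec (fs1 @ [(si, vi')] @ fs2)) l3)"
| write2:   "is_val 0 (L (Rec fs) l1) \<Longrightarrow> is_val 0 vx \<Longrightarrow> sx \<notin> fields fs \<Longrightarrow>
             tl_red 0 (L (Write (L (Rec fs) l1) (L (Const (CStr sx)) l2) vx) l3)
                      (L (Rec (fs @ [(sx, vx)])) l3)"
| del1:     "is_val 0 (L (Rec (fs1 @ [(si, vi)] @ fs2)) l1) \<Longrightarrow>
             tl_red 0 (L (Del (L (Rec (fs1 @ [(si, vi)] @ fs2)) l1) (L (Const (CStr si)) l2)) l3)
                      (L (Rec (fs1 @ fs2)) l3)"
| del2:     "is_val 0 (L (Rec fs) l1) \<Longrightarrow> sx \<notin> fields fs \<Longrightarrow>
             tl_red 0 (L (Del (L (Rec fs) l1) (L (Const (CStr sx)) l2)) l3) (L (Rec fs) l3)"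
| lift_app: "is_val 0 v \<Longrightarrow>
             tl_red 0 (L (App (L (Clo (Mark m (L t l1)) \<rho>) l2) v) l3)
                      (L (Mark m (L (App (L (Clo t \<rho>) l1) v) l3)) l3)"
| lift_if:  "is_val 0 v \<Longrightarrow>
             tl_red 0 (L (If (L (Mark m v) l0) (L t1 l1) (L t2 l2)) l)
                      (L (Mark m (L (If v (L t1 l1) (L t2 l2)) l)) l)"
| lift_unbox: "is_val 0 v \<Longrightarrow>
             tl_red 1 (L (Unbox (L (Mark m v) l1)) l2) (L (Mark m (L (Unbox v) l2)) l2)"
| lift_run: "is_val 0 v \<Longrightarrow>
             tl_red 0 (L (RunIn (L (Mark m v) l1) \<rho>) l2) (L (Mark m (L (RunIn v \<rho>) l2)) l2)"
| lift_read1: "is_val 0 v \<Longrightarrow>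
             tl_red 0 (L (Read (L (Mark m v) l1) e2) l2) (L (Mark m (L (Read v e2) l2)) l2)"
| lift_read2: "is_val 0 v \<Longrightarrow>
             tl_red 0 (L (Read e1 (L (Mark m v) l1)) l2) (L (Mark m (L (Read e1 v) l2)) l2)"
| lift_write1: "is_val 0 v \<Longrightarrow>
             tl_red 0 (L (Write (L (Mark m v) l1) e2 e3) l2) (L (Mark m (L (Write v e2 e3) l2)) l2)"
| lift_write2: "is_val 0 v \<Longrightarrow>
             tl_red 0 (L (Write e1 (L (Mark m v) l1) e3) l2) (L (Mark m (L (Write e1 v e3) l2)) l2)"
| lift_del1: "is_val 0 v \<Longrightarrow>
             tl_red 0 (L (Del (L (Mark m v) l1) e2) l2) (L (Mark m (L (Del v e2) l2)) l2)"
| lift_del2: "is_val 0 v \<Longrightarrow>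
             tl_red 0 (L (Del e1 (L (Mark m v) l1)) l2) (L (Mark m (L (Del e1 v) l2)) l2)"

text \<open>ctx_red m n e e': e = C<t1^l1>, e' = C<t2^l2> for a context C in C^m_n
  (hole at stage n inside stage m) with t1^l1 \<dashrightarrow>_n t2^l2.\<close>

inductive ctx_red :: "nat \<Rightarrow> nat \<Rightarrow> ('l, 'm) expr \<Rightarrow> ('l, 'm) expr \<Rightarrow> bool" where
  c_hole:   "tl_red n e e' \<Longrightarrow> ctx_red n n e e'"
| c_rec:    "\<forall>p\<in>set vs. is_val m (snd p) \<Longrightarrow> ctx_red m n e e' \<Longrightarrow>
             ctx_red m n (L (Rec (vs @ [(s, e)] @ es)) l) (L (Rec (vs @ [(s, e')] @ es)) l)"
| c_fun:    "ctx_red (Suc m) n e e' \<Longrightarrow> ctx_red (Suc m) n (L (Fun x e) l) (L (Fun x e') l)"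
| c_app1:   "ctx_red m n e e' \<Longrightarrow> ctx_red m n (L (App e e2) l) (L (App e' e2) l)"
| c_app2:   "is_val m v \<Longrightarrow> ctx_red m n e e' \<Longrightarrow> ctx_red m n (L (App v e) l) (L (App v e') l)"
| c_box:    "ctx_red (Suc m) n e e' \<Longrightarrow> ctx_red m n (L (Box e) l) (L (Box e') l)"
| c_unbox:  "ctx_red m n e e' \<Longrightarrow> ctx_red (Suc m) n (L (Unbox e) l) (L (Unbox e') l)"
| c_run:    "ctx_red m n e e' \<Longrightarrow> ctx_red m n (L (Run e) l) (L (Run e') l)"
| c_if1:    "ctx_red m n e e' \<Longrightarrow> ctx_red m n (L (If e e2 e3) l) (L (If e' e2 e3) l)"
| c_if2:    "is_val (Suc m) v1 \<Longrightarrow> ctx_red (Suc m) n e e' \<Longrightarrow>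
             ctx_red (Suc m) n (L (If v1 e e3) l) (L (If v1 e' e3) l)"
| c_if3:    "is_val (Suc m) v1 \<Longrightarrow> is_val (Suc m) v2 \<Longrightarrow> ctx_red (Suc m) n e e' \<Longrightarrow>
             ctx_red (Suc m) n (L (If v1 v2 e) l) (L (If v1 v2 e') l)"
| c_read1:  "ctx_red m n e e' \<Longrightarrow> ctx_red m n (L (Read e e2) l) (L (Read e' e2) l)"
| c_read2:  "is_val m v \<Longrightarrow> ctx_red m n e e' \<Longrightarrow> ctx_red m n (L (Read v e) l) (L (Read v e') l)"
| c_write1: "ctx_red m n e e' \<Longrightarrow> ctx_red m n (L (Write e e2 e3) l) (L (Write e' e2 e3) l)"
| c_write2: "is_val m v1 \<Longrightarrow> ctx_red m n e e' \<Longrightarrow>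
             ctx_red m n (L (Write v1 e e3) l) (L (Write v1 e' e3) l)"
| c_write3: "is_val m v1 \<Longrightarrow> is_val m v2 \<Longrightarrow> ctx_red m n e e' \<Longrightarrow>
             ctx_red m n (L (Write v1 v2 e) l) (L (Write v1 v2 e') l)"
| c_del1:   "ctx_red m n e e' \<Longrightarrow> ctx_red m n (L (Del e e2) l) (L (Del e' e2) l)"
| c_del2:   "is_val m v \<Longrightarrow> ctx_red m n e e' \<Longrightarrow> ctx_red m n (L (Del v e) l) (L (Del v e') l)"
| c_runin:  "ctx_red m n e e' \<Longrightarrow> ctx_red m n (L (RunIn e \<rho>) l) (L (RunIn e' \<rho>) l)"
| c_mark:   "ctx_red m n e e' \<Longrightarrow> ctx_red m n (L (Mark mk e) l) (L (Mark mk e') l)"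

definition eval_step :: "nat \<Rightarrow> ('l, 'm) expr \<Rightarrow> ('l, 'm) expr \<Rightarrow> bool" where
  "eval_step m e e' \<longleftrightarrow> (\<exists>n. ctx_red m n e e')"

datatype ('l, 'm) absval =
    NULL | UNDEF | BOOL | NUM | STRV
  | FUN name "('l, 'm) expr"
  | BOX "('l, 'm) expr"
  | REC 'l

datatype 'l absvar = AVar name | AField 'l string

type_synonym ('l, 'm) cache = "'l \<Rightarrow> ('l, 'm) absval set"
type_synonym ('l, 'm) aenv = "'l absvar \<Rightarrow> ('l, 'm) absval set"

fun abs_const :: "const \<Rightarrow> ('l, 'm) absval" where
  "abs_const CNull = NULL"
| "abs_const CUndef = UNDEF"
| "abs_const CTrue = BOOL"
| "abs_const CFalse = BOOL"
| "abs_const (CNum r) = NUM"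
| "abs_const (CStr s) = STRV"

inductive_set proto :: "('l, 'm) aenv \<Rightarrow> 'l \<Rightarrow> 'l set" for R :: "('l, 'm) aenv" and l :: 'l where
  proto_self: "l \<in> proto R l"
| proto_step: "p \<in> proto R l \<Longrightarrow> REC l' \<in> R (AField p proto_str) \<Longrightarrow> l' \<in> proto R l"

inductive
  acc :: "('l, 'm) cache \<Rightarrow> ('l, 'm) aenv \<Rightarrow> ('l, 'm) expr \<Rightarrow> bool" and
  acc_env :: "('l, 'm) cache \<Rightarrow> ('l, 'm) aenv \<Rightarrow> ('l, 'm) env \<Rightarrow> bool" and
  approx :: "('l, 'm) cache \<Rightarrow> ('l, 'm) aenv \<Rightarrow> ('l, 'm) absval \<Rightarrow> ('l, 'm) trm \<Rightarrow> bool"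
  for \<Gamma> :: "('l, 'm) cache" and R :: "('l, 'm) aenv"
where
  acc_const: "abs_const k \<in> \<Gamma> l \<Longrightarrow> acc \<Gamma> R (L (Const k) l)"
| acc_var:   "R (AVar x) \<subseteq> \<Gamma> l \<Longrightarrow> acc \<Gamma> R (L (Var x) l)"
| acc_rec:   "\<forall>p\<in>set fs. acc \<Gamma> R (snd p) \<Longrightarrow> REC l' \<in> \<Gamma> l \<Longrightarrow>
              \<forall>p\<in>set fs. \<Gamma> (lbl (snd p)) \<subseteq> R (AField l' (fst p)) \<Longrightarrow>
              acc \<Gamma> R (L (Rec fs) l)"
| acc_fun:   "acc \<Gamma> R e \<Longrightarrow> \<nu> \<in> \<Gamma> l \<Longrightarrow> approx \<Gamma> R \<nu> (Fun x e) \<Longrightarrow>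
              acc \<Gamma> R (L (Fun x e) l)"
| acc_app:   "acc \<Gamma> R e1 \<Longrightarrow> acc \<Gamma> R e2 \<Longrightarrow>
              \<forall>x e3. FUN x e3 \<in> \<Gamma> (lbl e1) \<longrightarrow> \<Gamma> (lbl e2) \<subseteq> R (AVar x) \<and> \<Gamma> (lbl e3) \<subseteq> \<Gamma> l \<Longrightarrow>
              acc \<Gamma> R (L (App e1 e2) l)"
| acc_box:   "acc \<Gamma> R e \<Longrightarrow> \<nu> \<in> \<Gamma> l \<Longrightarrow> approx \<Gamma> R \<nu> (Box e) \<Longrightarrow>
              acc \<Gamma> R (L (Box e) l)"
| acc_unbox: "acc \<Gamma> R e \<Longrightarrow> \<forall>e'. BOX e' \<in> \<Gamma> (lbl e) \<longrightarrow> \<Gamma> (lbl e') \<subseteq> \<Gamma> l0 \<Longrightarrow>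
              acc \<Gamma> R (L (Unbox e) l0)"
| acc_run:   "acc \<Gamma> R e \<Longrightarrow> \<forall>e'. BOX e' \<in> \<Gamma> (lbl e) \<longrightarrow> \<Gamma> (lbl e') \<subseteq> \<Gamma> l0 \<Longrightarrow>
              acc \<Gamma> R (L (Run e) l0)"
| acc_runin: "acc \<Gamma> R e \<Longrightarrow> \<forall>e'. BOX e' \<in> \<Gamma> (lbl e) \<longrightarrow> \<Gamma> (lbl e') \<subseteq> \<Gamma> l0 \<Longrightarrow>
              acc_env \<Gamma> R \<rho> \<Longrightarrow> acc \<Gamma> R (L (RunIn e \<rho>) l0)"
| acc_if:    "acc \<Gamma> R e1 \<Longrightarrow> acc \<Gamma> R e2 \<Longrightarrow> acc \<Gamma> R e3 \<Longrightarrow>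
              \<Gamma> (lbl e2) \<union> \<Gamma> (lbl e3) \<subseteq> \<Gamma> l4 \<Longrightarrow> acc \<Gamma> R (L (If e1 e2 e3) l4)"
| acc_clo:   "acc \<Gamma> R (L t l) \<Longrightarrow> acc_env \<Gamma> R \<rho> \<Longrightarrow> acc \<Gamma> R (L (Clo t \<rho>) l)"
| acc_read:  "acc \<Gamma> R e1 \<Longrightarrow> acc \<Gamma> R e2 \<Longrightarrow>
              \<forall>l'. REC l' \<in> \<Gamma> (lbl e1) \<longrightarrow> (\<forall>s. \<forall>l''\<in>proto R l'. R (AField l'' s) \<subseteq> \<Gamma> l) \<Longrightarrow>
              UNDEF \<in> \<Gamma> l \<Longrightarrow> acc \<Gamma> R (L (Read e1 e2) l)"
| acc_write: "acc \<Gamma> R e1 \<Longrightarrow> acc \<Gamma> R e2 \<Longrightarrow> acc \<Gamma> R e3 \<Longrightarrow>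
              \<forall>s l'. REC l' \<in> \<Gamma> (lbl e1) \<longrightarrow> \<Gamma> (lbl e3) \<subseteq> R (AField l' s) \<Longrightarrow>
              \<Gamma> (lbl e1) \<subseteq> \<Gamma> l \<Longrightarrow> acc \<Gamma> R (L (Write e1 e2 e3) l)"
| acc_del:   "acc \<Gamma> R e1 \<Longrightarrow> acc \<Gamma> R e2 \<Longrightarrow> \<Gamma> (lbl e1) \<subseteq> \<Gamma> l \<Longrightarrow>
              acc \<Gamma> R (L (Del e1 e2) l)"
| acc_mark:  "acc \<Gamma> R e \<Longrightarrow> \<Gamma> (lbl e) \<subseteq> \<Gamma> l \<Longrightarrow> acc \<Gamma> R (L (Mark mk e) l)"
| acc_env_I: "\<forall>x v. fmlookup \<rho> x = Some v \<longrightarrow> acc \<Gamma> R v \<and> \<Gamma> (lbl v) \<subseteq> R (AVar x) \<Longrightarrow>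
              acc_env \<Gamma> R \<rho>"
| ap_const:  "approx \<Gamma> R (abs_const k) (Const k)"
| ap_fun:    "approx \<Gamma> R (FUN x e) (Fun x e)"
| ap_box:    "approx \<Gamma> R (BOX e) (Box e)"
| ap_rec:    "\<forall>p\<in>set fs. \<exists>\<nu>\<in>R (AField l' (fst p)). approx \<Gamma> R \<nu> (trm_of (snd p)) \<Longrightarrow>
              approx \<Gamma> R (REC l') (Rec fs)"
| ap_step:   "approx \<Gamma> R \<nu> t \<Longrightarrow> eval_step n (L t l) (L t' l) \<Longrightarrow> approx \<Gamma> R \<nu> t'"
| ap_clo:    "approx \<Gamma> R \<nu> t \<Longrightarrow> acc_env \<Gamma> R \<rho> \<Longrightarrow> approx \<Gamma> R \<nu> (Clo t \<rho>)"

end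

theory Submission
  imports Defs
begin

text \<open>
  Strengthen the claim to: a step from e to e' preserves acceptability and only shrinks the
  abstract cache at the root, i.e. \<Gamma> (lbl e') \<subseteq> \<Gamma> (lbl e).  Every constraint of the
  analysis mentions the cache of an immediate subexpression either on the smaller side of an
  inclusion or as the range of a guard (FUN/BOX/REC \<in> \<Gamma> l), so replacing a subexpression by
  its reduct keeps the enclosing expression acceptable.  At the redexes themselves, the
  analysis of a function or box literal contains an abstract value FUN x e0 or BOX e0 whose
  body carries the label of the literal's body; this is an invariant of approximation, which
  is closed under reduction but never changes the head constructor or the body label.
\<close>

lemma lbl_relabel [simp]: "lbl (relabel e l) = l"
  by (cases e) simp

lemma lbl_clo [simp]: "lbl (clo \<rho> e) = lbl e"
  by (cases e) simp

lemma tl_red_lbl: "tl_red (Suc n) e e' \<Longrightarrow> lbl e' = lbl e"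
  by (induction "Suc n" e e' rule: tl_red.induct) auto

lemma ctx_red_lbl: "ctx_red (Suc m) n e e' \<Longrightarrow> lbl e' = lbl e"
  by (induction "Suc m" n e e' arbitrary: m rule: ctx_red.induct) (auto dest: tl_red_lbl)

fun strip_clo :: "('l, 'm) trm \<Rightarrow> ('l, 'm) trm" where
  "strip_clo (Clo t \<rho>) = strip_clo t"
| "strip_clo t = t"

definition approx_shape :: "('l, 'm) absval \<Rightarrow> ('l, 'm) trm \<Rightarrow> bool" where
  "approx_shape \<nu> t \<longleftrightarrow> (case \<nu> of
      FUN x e0 \<Rightarrow> \<exists>e. strip_clo t = Fun x e \<and> lbl e = lbl e0
    | BOX e0 \<Rightarrow> \<exists>e. strip_clo t = Box e \<and> lbl e = lbl e0
    | REC l \<Rightarrow> \<exists>fs. strip_clo t = Rec fs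
    | _ \<Rightarrow> \<exists>k. strip_clo t = Const k)"

lemma tl_red_approx_shape:
  assumes "tl_red n (L t l) e'" and "approx_shape \<nu> t"
  shows "approx_shape \<nu> (trm_of e')"
  using assms by (cases rule: tl_red.cases) (auto simp: approx_shape_def split: absval.splits)

lemma ctx_red_approx_shape:
  assumes "ctx_red m n (L t l) e'" and "approx_shape \<nu> t"
  shows "approx_shape \<nu> (trm_of e')"
  using assms
proof (cases rule: ctx_red.cases)
  case c_hole
  with assms(2) show ?thesis by (simp add: tl_red_approx_shape)
qed (auto simp: approx_shape_def split: absval.splits dest: ctx_red_lbl)

lemma approx_approx_shape: "approx \<Gamma> R \<nu> t \<Longrightarrow> approx_shape \<nu> t"
proof (induction rule: acc_acc_env_approx.inducts(3)[where ?P1.0 = "\<lambda>_. True" and ?P2.0 = "\<lambda>_. True"])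
  case (ap_const k)
  then show ?case by (cases k) (simp_all add: approx_shape_def)
next
  case (ap_step \<nu> t n l t')
  then show ?case
    unfolding eval_step_def by (metis ctx_red_approx_shape trm_of.simps)
qed (simp_all add: approx_shape_def split: absval.splits)

lemma approx_FunE:
  assumes "approx \<Gamma> R \<nu> (Fun x e)"
  obtains e0 where "\<nu> = FUN x e0" and "lbl e0 = lbl e"
proof -
  have "approx_shape \<nu> (Fun x e)" using assms by (rule approx_approx_shape)
  then show ?thesis by (cases \<nu>) (auto simp: approx_shape_def intro: that)
qed

lemma approx_BoxE:
  assumes "approx \<Gamma> R \<nu> (Box e)"
  obtains e0 where "\<nu> = BOX e0" and "lbl e0 = lbl e"
proof -
  have "approx_shape \<nu> (Box e)" using assms by (rule approx_approx_shape)
  then show ?thesis by (cases \<nu>) (auto simp: approx_shape_def intro: that)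
qed

text \<open>The label passed to rule ap_step is arbitrary: approximation ignores labels.\<close>

lemma approx_Fun_clo:
  "approx \<Gamma> R \<nu> (Fun x e) \<Longrightarrow> acc_env \<Gamma> R \<rho> \<Longrightarrow> approx \<Gamma> R \<nu> (Fun x (clo \<rho> e))"
  by (rule ap_step[OF ap_clo, where n = 1 and l = undefined])
    (auto simp: eval_step_def intro: c_hole ep_fun)

lemma approx_Box_clo:
  "approx \<Gamma> R \<nu> (Box e) \<Longrightarrow> acc_env \<Gamma> R \<rho> \<Longrightarrow> approx \<Gamma> R \<nu> (Box (clo \<rho> e))"
  by (rule ap_step[OF ap_clo, where n = 0 and l = undefined])
    (auto simp: eval_step_def intro: c_hole ep_box)

inductive_simps acc_Const: "acc \<Gamma> R (L (Const k) l)"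
inductive_simps acc_Var: "acc \<Gamma> R (L (Var x) l)"
inductive_simps acc_Rec: "acc \<Gamma> R (L (Rec fs) l)"
inductive_simps acc_Fun: "acc \<Gamma> R (L (Fun x e) l)"
inductive_simps acc_App: "acc \<Gamma> R (L (App e1 e2) l)"
inductive_simps acc_Box: "acc \<Gamma> R (L (Box e) l)"
inductive_simps acc_Unbox: "acc \<Gamma> R (L (Unbox e) l)"
inductive_simps acc_Run: "acc \<Gamma> R (L (Run e) l)"
inductive_simps acc_RunIn: "acc \<Gamma> R (L (RunIn e \<rho>) l)"
inductive_simps acc_If: "acc \<Gamma> R (L (If e1 e2 e3) l)"
inductive_simps acc_Clo: "acc \<Gamma> R (L (Clo t \<rho>) l)"
inductive_simps acc_Read: "acc \<Gamma> R (L (Read e1 e2) l)"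
inductive_simps acc_Write: "acc \<Gamma> R (L (Write e1 e2 e3) l)"
inductive_simps acc_Del: "acc \<Gamma> R (L (Del e1 e2) l)"
inductive_simps acc_Mark: "acc \<Gamma> R (L (Mark m e) l)"
inductive_simps acc_env_iff: "acc_env \<Gamma> R \<rho>"

lemmas acc_simps = acc_Const acc_Var acc_Rec acc_Fun acc_App acc_Box acc_Unbox acc_Run
  acc_RunIn acc_If acc_Clo acc_Read acc_Write acc_Del acc_Mark

lemma acc_clo_iff [simp]: "acc \<Gamma> R (clo \<rho> e) \<longleftrightarrow> acc \<Gamma> R e \<and> acc_env \<Gamma> R \<rho>"
  by (cases e) (simp add: acc_Clo)

lemma acc_relabel: "acc \<Gamma> R e \<Longrightarrow> \<Gamma> (lbl e) \<subseteq> \<Gamma> l \<Longrightarrow> acc \<Gamma> R (relabel e l)"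
proof (induction arbitrary: l rule: acc_acc_env_approx.inducts(1)[where ?P2.0 = "\<lambda>_. True" and ?P3.0 = "\<lambda>_ _. True"])
qed (fastforce intro: acc_acc_env_approx.intros)+

lemma acc_env_lookup:
  "acc_env \<Gamma> R \<rho> \<Longrightarrow> fmlookup \<rho> x = Some v \<Longrightarrow> acc \<Gamma> R v \<and> \<Gamma> (lbl v) \<subseteq> R (AVar x)"
  by (simp add: acc_env_iff)

lemma acc_env_fmupd:
  "acc_env \<Gamma> R \<rho> \<Longrightarrow> acc \<Gamma> R v \<Longrightarrow> \<Gamma> (lbl v) \<subseteq> R (AVar x) \<Longrightarrow> acc_env \<Gamma> R (fmupd x v \<rho>)"
  by (simp add: acc_env_iff)

lemma acc_Fun_FUN:
  assumes "acc \<Gamma> R (L (Fun x e) l)"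
  obtains e0 where "FUN x e0 \<in> \<Gamma> l" and "lbl e0 = lbl e"
  using assms by (auto simp: acc_Fun elim!: approx_FunE intro: that)

lemma acc_Box_BOX:
  assumes "acc \<Gamma> R (L (Box e) l)"
  obtains e0 where "BOX e0 \<in> \<Gamma> l" and "lbl e0 = lbl e"
  using assms by (auto simp: acc_Box elim!: approx_BoxE intro: that)

lemma acc_Rec_fieldE:
  assumes "acc \<Gamma> R (L (Rec fs) l)" and "(s, v) \<in> set fs"
  obtains l' where "REC l' \<in> \<Gamma> l" and "acc \<Gamma> R v" and "\<Gamma> (lbl v) \<subseteq> R (AField l' s)"
  using assms unfolding acc_Rec by (metis fst_conv snd_conv)

lemma proto_trans: "l'' \<in> proto R l' \<Longrightarrow> l' \<in> proto R l \<Longrightarrow> l'' \<in> proto R l"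
  by (induction rule: proto.induct) (auto intro: proto.intros)

lemma proto_mono_field:
  assumes "REC l'' \<in> R (AField l' proto_str)"
  shows "proto R l'' \<subseteq> proto R l'"
proof
  fix p assume "p \<in> proto R l''"
  moreover have "l'' \<in> proto R l'" using proto_self assms by (rule proto_step)
  ultimately show "p \<in> proto R l'" by (rule proto_trans)
qed

lemma acc_Var_lookup:
  assumes "acc \<Gamma> R (L (Clo (Var x) \<rho>) l)" and "fmlookup \<rho> x = Some v"
  shows "acc \<Gamma> R (relabel v l)"
proof -
  from assms(1) have "acc_env \<Gamma> R \<rho>" and "R (AVar x) \<subseteq> \<Gamma> l"
    by (simp_all add: acc_Clo acc_Var)
  with assms(2) show ?thesis
    by (meson acc_env_lookup acc_relabel order_trans)
qed

lemma acc_App_beta: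
  assumes "acc \<Gamma> R (L (App (L (Clo (Fun x (L t l1)) \<rho>) l2) v) l3)"
  shows "acc \<Gamma> R (L (Clo t (fmupd x v \<rho>)) l1)" and "\<Gamma> l1 \<subseteq> \<Gamma> l3"
proof -
  from assms have f: "acc \<Gamma> R (L (Fun x (L t l1)) l2)" and "acc_env \<Gamma> R \<rho>" and "acc \<Gamma> R v"
    and flow: "\<forall>y e3. FUN y e3 \<in> \<Gamma> l2 \<longrightarrow> \<Gamma> (lbl v) \<subseteq> R (AVar y) \<and> \<Gamma> (lbl e3) \<subseteq> \<Gamma> l3"
    by (simp_all add: acc_App acc_Clo)
  obtain e0 where "FUN x e0 \<in> \<Gamma> l2" and "lbl e0 = l1"
    using f by (rule acc_Fun_FUN) simp
  with flow have "\<Gamma> (lbl v) \<subseteq> R (AVar x)" and "\<Gamma> l1 \<subseteq> \<Gamma> l3"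
    by metis+
  with f \<open>acc_env \<Gamma> R \<rho>\<close> \<open>acc \<Gamma> R v\<close> show "acc \<Gamma> R (L (Clo t (fmupd x v \<rho>)) l1)"
    by (simp add: acc_Fun acc_Clo acc_env_fmupd)
  show "\<Gamma> l1 \<subseteq> \<Gamma> l3" by fact
qed

lemma acc_Box_flow:
  assumes "acc \<Gamma> R (L (Box v) l1)" and "\<forall>e'. BOX e' \<in> \<Gamma> l1 \<longrightarrow> \<Gamma> (lbl e') \<subseteq> \<Gamma> l2"
  shows "acc \<Gamma> R (relabel v l2)"
proof -
  obtain e0 where "BOX e0 \<in> \<Gamma> l1" and "lbl e0 = lbl v"
    using assms(1) by (rule acc_Box_BOX)
  with assms(2) have "\<Gamma> (lbl v) \<subseteq> \<Gamma> l2" by metis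
  with assms(1) show ?thesis by (simp add: acc_Box acc_relabel)
qed

lemma acc_Read_field:
  assumes "acc \<Gamma> R (L (Read (L (Rec (fs1 @ [(s, v)] @ fs2)) l1) e) l3)"
  shows "acc \<Gamma> R (relabel v l3)"
proof -
  from assms have r: "acc \<Gamma> R (L (Rec (fs1 @ [(s, v)] @ fs2)) l1)"
    and flow: "\<forall>l'. REC l' \<in> \<Gamma> l1 \<longrightarrow> (\<forall>s. \<forall>l''\<in>proto R l'. R (AField l'' s) \<subseteq> \<Gamma> l3)"
    by (simp_all add: acc_Read)
  obtain l' where "REC l' \<in> \<Gamma> l1" and "acc \<Gamma> R v" and "\<Gamma> (lbl v) \<subseteq> R (AField l' s)"
    using acc_Rec_fieldE[OF r, of s v] by auto
  moreover from flow \<open>REC l' \<in> \<Gamma> l1\<close> have "R (AField l' s) \<subseteq> \<Gamma> l3"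
    by (simp add: proto_self)
  ultimately show ?thesis by (simp add: acc_relabel)
qed

lemma acc_Read_proto:
  assumes "acc \<Gamma> R (L (Read (L (Rec (fs1 @ [(proto_str, L (Rec fs') l1')] @ fs2)) l1) e) l3)"
  shows "acc \<Gamma> R (L (Read (L (Rec fs') l1') e) l3)"
proof -
  from assms have r: "acc \<Gamma> R (L (Rec (fs1 @ [(proto_str, L (Rec fs') l1')] @ fs2)) l1)"
    and "acc \<Gamma> R e" and "UNDEF \<in> \<Gamma> l3"
    and flow: "\<forall>l'. REC l' \<in> \<Gamma> l1 \<longrightarrow> (\<forall>s. \<forall>l''\<in>proto R l'. R (AField l'' s) \<subseteq> \<Gamma> l3)"
    by (simp_all add: acc_Read)
  obtain l' where "REC l' \<in> \<Gamma> l1" and "acc \<Gamma> R (L (Rec fs') l1')"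
    and proto_field: "\<Gamma> l1' \<subseteq> R (AField l' proto_str)"
    using acc_Rec_fieldE[OF r, of proto_str "L (Rec fs') l1'"] by auto
  have "R (AField p s) \<subseteq> \<Gamma> l3" if "REC l'' \<in> \<Gamma> l1'" and "p \<in> proto R l''" for l'' s p
  proof -
    from that(1) proto_field have "proto R l'' \<subseteq> proto R l'"
      by (intro proto_mono_field) (rule subsetD)
    with that(2) have "p \<in> proto R l'" by (rule rev_subsetD)
    with flow \<open>REC l' \<in> \<Gamma> l1\<close> show ?thesis by simp
  qed
  with \<open>acc \<Gamma> R (L (Rec fs') l1')\<close> \<open>acc \<Gamma> R e\<close> \<open>UNDEF \<in> \<Gamma> l3\<close> show ?thesis
    by (simp add: acc_Read)
qed

lemma acc_App_antimono:
  assumes "acc \<Gamma> R (L (App e1 e2) l)" and "acc \<Gamma> R e1'" and "\<Gamma> (lbl e1') \<subseteq> \<Gamma> (lbl e1)"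
  shows "acc \<Gamma> R (L (App e1' e2) l)"
  using assms by (auto simp: acc_App) (meson subsetD)

lemma acc_Read_antimono:
  assumes "acc \<Gamma> R (L (Read e1 e2) l)" and "acc \<Gamma> R e1'" and "\<Gamma> (lbl e1') \<subseteq> \<Gamma> (lbl e1)"
  shows "acc \<Gamma> R (L (Read e1' e2) l)"
  using assms by (auto simp: acc_Read) (meson subsetD)

lemma acc_Write_Rec:
  assumes "acc \<Gamma> R (L (Write (L (Rec fs) l1) e v) l)"
    and "\<forall>p\<in>set fs'. p \<in> set fs \<or> snd p = v"
  shows "acc \<Gamma> R (L (Rec fs') l)"
proof -
  from assms(1) obtain l' where "REC l' \<in> \<Gamma> l1" and "\<Gamma> l1 \<subseteq> \<Gamma> l" and "acc \<Gamma> R v"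
    and "\<forall>p\<in>set fs. acc \<Gamma> R (snd p) \<and> \<Gamma> (lbl (snd p)) \<subseteq> R (AField l' (fst p))"
    and "\<forall>s. \<Gamma> (lbl v) \<subseteq> R (AField l' s)"
    by (auto simp: acc_Write acc_Rec)
  with assms(2) show ?thesis
    unfolding acc_Rec by (intro conjI exI[of _ l']) (auto dest: bspec)
qed

lemma tl_red_preserves_acc:
  "tl_red n e e' \<Longrightarrow> acc \<Gamma> R e \<Longrightarrow> acc \<Gamma> R e' \<and> \<Gamma> (lbl e') \<subseteq> \<Gamma> (lbl e)"
proof (induction rule: tl_red.induct)
  case ep_rec
  then show ?case by (fastforce simp: acc_Rec acc_Clo split: prod.splits)
next
  case ep_fun
  then show ?case by (auto simp: acc_Fun acc_Clo intro: approx_Fun_clo)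
next
  case ep_box
  then show ?case by (auto simp: acc_Box acc_Clo intro: approx_Box_clo)
next
  case lookup_rule
  then show ?case by (simp add: acc_Var_lookup)
next
  case app_rule
  then show ?case by (simp add: acc_App_beta)
next
  case unbox_rule
  then show ?case by (auto simp: acc_Unbox intro: acc_Box_flow)
next
  case (run_rule v l1 \<rho> l2)
  then have "acc \<Gamma> R (relabel v l2)" and "acc_env \<Gamma> R \<rho>"
    by (auto simp: acc_RunIn intro: acc_Box_flow)
  then show ?case by (cases v) (simp add: acc_Clo)
next
  case read1
  then show ?case by (simp add: acc_Read_field)
next
  case read2
  then show ?case by (simp add: acc_Read_proto)
next
  case write1
  then show ?case by (auto intro: acc_Write_Rec)
next
  case write2
  then show ?case by (auto intro: acc_Write_Rec)
next
  case (lift_app v m t l1 \<rho> l2 l3)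
  from lift_app.prems have "acc \<Gamma> R (L (Clo t \<rho>) l1)" and "\<Gamma> l1 \<subseteq> \<Gamma> l2"
    by (simp_all add: acc_App acc_Clo acc_Mark)
  with lift_app.prems have "acc \<Gamma> R (L (App (L (Clo t \<rho>) l1) v) l3)"
    by (metis acc_App_antimono lbl.simps)
  then show ?case by (simp add: acc_Mark)
next
  case (lift_read1 v m l1 e2 l2)
  from lift_read1.prems have "acc \<Gamma> R v" and "\<Gamma> (lbl v) \<subseteq> \<Gamma> l1"
    by (simp_all add: acc_Read acc_Mark)
  with lift_read1.prems have "acc \<Gamma> R (L (Read v e2) l2)"
    by (metis acc_Read_antimono lbl.simps)
  then show ?case by (simp add: acc_Mark)
qed (auto simp: acc_simps)

lemma ctx_red_preserves_acc:
  "ctx_red m n e e' \<Longrightarrow> acc \<Gamma> R e \<Longrightarrow> acc \<Gamma> R e' \<and> \<Gamma> (lbl e') \<subseteq> \<Gamma> (lbl e)"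
proof (induction rule: ctx_red.induct)
  case c_hole
  then show ?case by (rule tl_red_preserves_acc)
next
  case c_rec
  then show ?case by (fastforce simp: acc_Rec)
next
  case (c_fun m n e e' x l)
  then have "eval_step (Suc m) (L (Fun x e) l) (L (Fun x e') l)"
    unfolding eval_step_def by (blast intro: ctx_red.c_fun)
  with c_fun show ?case by (auto simp: acc_Fun intro: ap_step)
next
  case (c_box m n e e' l)
  then have "eval_step m (L (Box e) l) (L (Box e') l)"
    unfolding eval_step_def by (blast intro: ctx_red.c_box)
  with c_box show ?case by (auto simp: acc_Box intro: ap_step)
next
  case (c_app1 m n e e' e2 l)
  from c_app1.prems have "acc \<Gamma> R e" by (simp add: acc_App)
  with c_app1.IH have "acc \<Gamma> R e'" and "\<Gamma> (lbl e') \<subseteq> \<Gamma> (lbl e)" by simp_all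
  with c_app1.prems have "acc \<Gamma> R (L (App e' e2) l)" by (rule acc_App_antimono)
  then show ?case by simp
next
  case (c_read1 m n e e' e2 l)
  from c_read1.prems have "acc \<Gamma> R e" by (simp add: acc_Read)
  with c_read1.IH have "acc \<Gamma> R e'" and "\<Gamma> (lbl e') \<subseteq> \<Gamma> (lbl e)" by simp_all
  with c_read1.prems have "acc \<Gamma> R (L (Read e' e2) l)" by (rule acc_Read_antimono)
  then show ?case by simp
qed (auto simp: acc_simps)

theorem theorem2:
  fixes \<Gamma> :: "('l, 'm) cache" and R :: "('l, 'm) aenv"
    and e e' :: "('l, 'm) expr" and n :: nat
  assumes "acc \<Gamma> R e"
    and "eval_step n e e'"
  shows "acc \<Gamma> R e'"
  using assms ctx_red_preserves_acc unfolding eval_step_def by blast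

end
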